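(* Suppose $\tau_L > \delta_L + 1$ and $\delta_L > 0$. Let $K = \left[ -\lambda_L^s, m_{\rm max} \right]$ for some $m_{\rm max} \ge 0$. (i) If $m_{\rm max} \le m_{\rm crit}$ then $\Psi_K$ is invariant and expanding for $A_L$ with expansion factor $\lambda_L^u$. (ii) If $m_{\rm max} \le 1$ then $\Psi_K$ is invariant and expanding for $A_L$ with expansion factor $c_L = \min \left\{ \lambda_L^u, \frac{\lambda_L^u + 1}{\sqrt{2}} \right\}$.
   Context: Let $A_L = \begin{bmatrix} \tau_L & 1 \\ -\delta_L & 0 \end{bmatrix}$ with $\tau_L > \delta_L + 1$, $\delta_L > 0$, so its eigenvalues satisfy $0 < \lambda_L^s < 1 < \lambda_L^u$. Define $m_{\rm crit} = \lambda_L^s + \frac{2 \tau_L}{(\lambda_L^u)^2 - 1}$ (which is positive); it is the unique value $m \neq -\lambda_L^s$ for which $\|A_L v\| = \lambda_L^u \|v\|$ with $v = (1, m)^T$. A set $C \subset \mathbb{R}^2$ is a cone if $tv \in C$ for all $v \in C$, $t \in \mathbb{R}$. For an interval $K \subset \mathbb{R}$, $\Psi_K = \{ t (1, m)^T \mid m \in K, t \in \mathbb{R} \}$ (the cone of vectors with slope in $K$). A cone $C$ is invariant for a $2\times 2$ matrix $A$ if $Av \in C$ for all $v \in C$, and expanding with expansion factor $c > 1$ if $\|Av\| \ge c \|v\|$ for all $v \in C$ (Euclidean norm). *)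

theory Defs
  imports "HOL-Analysis.Analysis"
begin

definition A_L :: "real \<Rightarrow> real \<Rightarrow> real^2^2" where
  "A_L tau delta = vector [vector [tau, 1], vector [- delta, 0]]"

text \<open>Eigenvalues of A_L: roots of x^2 - tau x + delta = 0 (stable / unstable).\<close>
definition lambda_s :: "real \<Rightarrow> real \<Rightarrow> real" where
  "lambda_s tau delta = (tau - sqrt (tau\<^sup>2 - 4 * delta)) / 2"

definition lambda_u :: "real \<Rightarrow> real \<Rightarrow> real" where
  "lambda_u tau delta = (tau + sqrt (tau\<^sup>2 - 4 * delta)) / 2"

definition m_crit :: "real \<Rightarrow> real \<Rightarrow> real" where
  "m_crit tau delta = lambda_s tau delta + 2 * tau / ((lambda_u tau delta)\<^sup>2 - 1)"

definition Psi :: "real set \<Rightarrow> (real^2) set" where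
  "Psi K = {t *\<^sub>R vector [1, m] | t m. m \<in> K}"

definition invariant_cone :: "real^2^2 \<Rightarrow> (real^2) set \<Rightarrow> bool" where
  "invariant_cone A C \<longleftrightarrow> (\<forall>v\<in>C. A *v v \<in> C)"

definition expanding_cone :: "real^2^2 \<Rightarrow> (real^2) set \<Rightarrow> real \<Rightarrow> bool" where
  "expanding_cone A C c \<longleftrightarrow> c > 1 \<and> (\<forall>v\<in>C. norm (A *v v) \<ge> c * norm v)"

end

theory Submission
  imports Defs
begin

text \<open>
  Write \<open>tau = ls + lu\<close> and \<open>delta = ls * lu\<close> with the eigenvalues \<open>0 < ls\<close> and \<open>1 < lu\<close>.
  The matrix sends the direction \<open>(1, m)\<close> to a multiple of \<open>(1, - ls * lu / (ls + lu + m))\<close>;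
  for \<open>m \<ge> - ls\<close> this new slope lies in \<open>[- ls, 0]\<close>, which gives invariance.
  Expansion by \<open>c\<close> on slope \<open>m\<close> means \<open>c\<^sup>2 (1 + m\<^sup>2) \<le> (ls + lu + m)\<^sup>2 + (ls lu)\<^sup>2\<close>.
  For \<open>c = lu\<close> the difference of the two sides factors as
  \<open>(lu\<^sup>2 - 1) (m + ls) (m_crit - m)\<close>. For general \<open>1 \<le> c \<le> lu\<close> it is a concave
  quadratic in \<open>m\<close> that equals \<open>(lu\<^sup>2 - c\<^sup>2) (1 + ls\<^sup>2) \<ge> 0\<close> at \<open>m = - ls\<close>, so it suffices
  to check the right end of the slope interval; at \<open>m = 1\<close> it is at least \<open>(lu + 1)\<^sup>2 - 2 c\<^sup>2\<close>.
\<close>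

lemma norm_vector_2: "norm (vector [x, y] :: real^2) = sqrt (x\<^sup>2 + y\<^sup>2)"
  by (simp add: norm_vec_def L2_set_def sum_2)

lemma A_L_mult_vector: "A_L tau delta *v vector [x, y] = vector [tau * x + y, - delta * x]"
  by (simp add: vec_eq_iff forall_2 A_L_def matrix_vector_mult_def sum_2)

lemma A_L_mult_slope_vector:
  assumes "tau + m \<noteq> 0"
  shows "A_L tau delta *v (t *\<^sub>R vector [1, m])
           = (t * (tau + m)) *\<^sub>R vector [1, - delta / (tau + m)]"
  using assms by (simp add: matrix_vector_mult_scaleR A_L_mult_vector vec_eq_iff forall_2)

lemma discriminant_nonneg:
  fixes tau delta :: real
  assumes "delta + 1 < tau" "0 \<le> delta"
  shows "4 * delta \<le> tau\<^sup>2"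
proof -
  have "4 * delta \<le> (delta + 1)\<^sup>2"
    using sum_squares_ge_zero[of "delta - 1" 0] by (simp add: power2_eq_square algebra_simps)
  also have "\<dots> \<le> tau\<^sup>2"
    using assms by (intro power_mono) auto
  finally show ?thesis .
qed

lemma lambda_s_plus_lambda_u: "lambda_s tau delta + lambda_u tau delta = tau"
  by (simp add: lambda_s_def lambda_u_def field_simps)

lemma lambda_s_times_lambda_u:
  assumes "4 * delta \<le> tau\<^sup>2"
  shows "lambda_s tau delta * lambda_u tau delta = delta"
proof -
  have "(sqrt (tau\<^sup>2 - 4 * delta))\<^sup>2 = tau\<^sup>2 - 4 * delta"
    using assms by simp
  then show ?thesis
    by (simp add: lambda_s_def lambda_u_def field_simps power2_eq_square)
qed

lemma lambda_s_pos:
  assumes "0 < delta" "0 < tau"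
  shows "0 < lambda_s tau delta"
proof -
  have "sqrt (tau\<^sup>2 - 4 * delta) < sqrt (tau\<^sup>2)"
    using assms by (intro real_sqrt_less_mono) simp
  then show ?thesis
    using assms by (simp add: lambda_s_def)
qed

lemma one_less_lambda_u:
  assumes "delta + 1 < tau"
  shows "1 < lambda_u tau delta"
proof -
  have "(2 - tau)\<^sup>2 < tau\<^sup>2 - 4 * delta"
    using assms by (simp add: power2_eq_square algebra_simps)
  then have "\<bar>2 - tau\<bar> < sqrt (tau\<^sup>2 - 4 * delta)"
    using real_sqrt_less_mono by fastforce
  then show ?thesis
    unfolding lambda_u_def by (simp add: abs_less_iff)
qed

lemma invariant_cone_A_L:
  assumes "0 \<le> ls" "0 < lu" "0 \<le> m_max"
  shows "invariant_cone (A_L (ls + lu) (ls * lu)) (Psi {-ls..m_max})"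
  unfolding invariant_cone_def
proof
  fix v
  assume "v \<in> Psi {-ls..m_max}"
  then obtain t m where v: "v = t *\<^sub>R vector [1, m]" and m: "-ls \<le> m" "m \<le> m_max"
    unfolding Psi_def by auto
  have "lu \<le> ls + lu + m"
    using m by simp
  then have "ls * lu / (ls + lu + m) \<le> ls" "0 \<le> ls * lu / (ls + lu + m)"
    using assms by (auto simp: divide_simps mult_left_mono)
  then have "- (ls * lu) / (ls + lu + m) \<in> {-ls..m_max}"
    using assms by auto
  moreover have "ls + lu + m \<noteq> 0"
    using assms(2) \<open>lu \<le> ls + lu + m\<close> by linarith
  ultimately show "A_L (ls + lu) (ls * lu) *v v \<in> Psi {-ls..m_max}"
    unfolding v A_L_mult_slope_vector[OF \<open>ls + lu + m \<noteq> 0\<close>] Psi_def by blast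
qed

lemma expanding_cone_A_L:
  assumes "1 < c" and bound: "\<And>m. m \<in> K \<Longrightarrow> c\<^sup>2 * (1 + m\<^sup>2) \<le> (tau + m)\<^sup>2 + delta\<^sup>2"
  shows "expanding_cone (A_L tau delta) (Psi K) c"
  unfolding expanding_cone_def
proof (intro conjI ballI)
  fix v
  assume "v \<in> Psi K"
  then obtain t m where v: "v = t *\<^sub>R vector [1, m]" and "m \<in> K"
    unfolding Psi_def by auto
  have "c * sqrt (1 + m\<^sup>2) = sqrt (c\<^sup>2 * (1 + m\<^sup>2))"
    using assms by (simp add: real_sqrt_mult)
  also have "\<dots> \<le> sqrt ((tau + m)\<^sup>2 + delta\<^sup>2)"
    using bound[OF \<open>m \<in> K\<close>] by simp
  finally have "\<bar>t\<bar> * (c * sqrt (1 + m\<^sup>2)) \<le> \<bar>t\<bar> * sqrt ((tau + m)\<^sup>2 + delta\<^sup>2)"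
    by (simp add: mult_left_mono)
  then show "c * norm v \<le> norm (A_L tau delta *v v)"
    by (simp add: v A_L_mult_vector norm_vector_2 algebra_simps)
qed (use assms in simp)

lemma concave_quadratic_nonneg_between:
  fixes p q r a b x :: real
  assumes "p \<le> 0" "a \<le> x" "x \<le> b"
    and fa: "0 \<le> p * a\<^sup>2 + q * a + r" and fb: "0 \<le> p * b\<^sup>2 + q * b + r"
  shows "0 \<le> p * x\<^sup>2 + q * x + r"
proof (cases "a = b")
  case True
  then show ?thesis using assms by simp
next
  case False
  have "0 \<le> (b - x) * (p * a\<^sup>2 + q * a + r)" "0 \<le> (x - a) * (p * b\<^sup>2 + q * b + r)"
    using assms by simp_all
  moreover have "0 \<le> (- p) * ((b - a) * (x - a) * (b - x))"
    using assms by (intro mult_nonneg_nonneg) auto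
  moreover have "(b - a) * (p * x\<^sup>2 + q * x + r)
          = (b - x) * (p * a\<^sup>2 + q * a + r) + (x - a) * (p * b\<^sup>2 + q * b + r)
            + (- p) * ((b - a) * (x - a) * (b - x))"
    by (simp add: algebra_simps power2_eq_square)
  ultimately have "0 \<le> (b - a) * (p * x\<^sup>2 + q * x + r)"
    by linarith
  then show ?thesis
    using assms False by (simp add: zero_le_mult_iff)
qed

lemma slope_expansion_by_lambda_u:
  fixes ls lu m :: real
  assumes "1 < lu" "- ls \<le> m" "m \<le> ls + 2 * (ls + lu) / (lu\<^sup>2 - 1)"
  shows "lu\<^sup>2 * (1 + m\<^sup>2) \<le> (ls + lu + m)\<^sup>2 + (ls * lu)\<^sup>2"
proof -
  have "0 < lu\<^sup>2 - 1"
    using assms by (simp add: less_1_mult power2_eq_square)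
  then have "(ls + lu + m)\<^sup>2 + (ls * lu)\<^sup>2 - lu\<^sup>2 * (1 + m\<^sup>2)
               = (lu\<^sup>2 - 1) * (m + ls) * (ls + 2 * (ls + lu) / (lu\<^sup>2 - 1) - m)"
    by (simp add: field_simps power2_eq_square)
  also have "\<dots> \<ge> 0"
    using assms \<open>0 < lu\<^sup>2 - 1\<close> by simp
  finally show ?thesis by simp
qed

lemma slope_expansion_on_interval:
  fixes c ls lu m b :: real
  assumes "1 \<le> c" "c \<le> lu" "- ls \<le> m" "m \<le> b"
    and "c\<^sup>2 * (1 + b\<^sup>2) \<le> (ls + lu + b)\<^sup>2 + (ls * lu)\<^sup>2"
  shows "c\<^sup>2 * (1 + m\<^sup>2) \<le> (ls + lu + m)\<^sup>2 + (ls * lu)\<^sup>2"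
proof -
  let ?f = "\<lambda>x. (1 - c\<^sup>2) * x\<^sup>2 + (2 * (ls + lu)) * x + ((ls + lu)\<^sup>2 + (ls * lu)\<^sup>2 - c\<^sup>2)"
  have f_eq: "?f x = (ls + lu + x)\<^sup>2 + (ls * lu)\<^sup>2 - c\<^sup>2 * (1 + x\<^sup>2)" for x
    by (simp add: algebra_simps power2_eq_square)
  have "c\<^sup>2 \<le> lu\<^sup>2"
    using assms by (intro power_mono) auto
  have "0 \<le> ?f m"
  proof (rule concave_quadratic_nonneg_between[where a = "- ls" and b = b])
    show "1 - c\<^sup>2 \<le> 0"
      using assms by (simp add: one_le_power)
    have "?f (- ls) = (lu\<^sup>2 - c\<^sup>2) * (1 + ls\<^sup>2)"
      by (simp add: algebra_simps power2_eq_square)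
    then show "0 \<le> ?f (- ls)"
      using \<open>c\<^sup>2 \<le> lu\<^sup>2\<close> by simp
    show "0 \<le> ?f b"
      using assms(5) unfolding f_eq by simp
  qed (use assms in auto)
  then show ?thesis
    unfolding f_eq by simp
qed

lemma expanding_cone_A_L_lambda_u:
  assumes "1 < lu" "m_max \<le> ls + 2 * (ls + lu) / (lu\<^sup>2 - 1)"
  shows "expanding_cone (A_L (ls + lu) (ls * lu)) (Psi {-ls..m_max}) lu"
  using assms by (intro expanding_cone_A_L slope_expansion_by_lambda_u) auto

lemma expanding_cone_A_L_slopes_le_one:
  assumes "0 \<le> ls" "1 < lu" "m_max \<le> 1"
  shows "expanding_cone (A_L (ls + lu) (ls * lu)) (Psi {-ls..m_max}) (min lu ((lu + 1) / sqrt 2))"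
proof -
  define c where "c = min lu ((lu + 1) / sqrt 2)"
  have "sqrt 2 < 2"
    using real_sqrt_less_mono[of 2 4] by simp
  then have "1 < c"
    using assms by (simp add: c_def field_simps)
  have "c \<le> lu" "c \<le> (lu + 1) / sqrt 2"
    unfolding c_def by simp_all
  then have "c\<^sup>2 * 2 \<le> ((lu + 1) / sqrt 2)\<^sup>2 * 2"
    using \<open>1 < c\<close> by (intro mult_right_mono power_mono) auto
  also have "\<dots> = (lu + 1)\<^sup>2"
    by (simp add: power_divide)
  also have "\<dots> \<le> (ls + lu + 1)\<^sup>2"
    using assms by (intro power_mono) auto
  also have "\<dots> \<le> (ls + lu + 1)\<^sup>2 + (ls * lu)\<^sup>2"
    by simp
  finally have "c\<^sup>2 * (1 + 1\<^sup>2) \<le> (ls + lu + 1)\<^sup>2 + (ls * lu)\<^sup>2"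
    by simp
  then have "c\<^sup>2 * (1 + m\<^sup>2) \<le> (ls + lu + m)\<^sup>2 + (ls * lu)\<^sup>2" if "m \<in> {-ls..m_max}" for m
    using that assms \<open>1 < c\<close> \<open>c \<le> lu\<close> by (auto intro: slope_expansion_on_interval[where b = 1])
  then show ?thesis
    unfolding c_def[symmetric] using \<open>1 < c\<close> by (intro expanding_cone_A_L) auto
qed

theorem lemma4p1:
  fixes tau delta m_max :: real
  assumes "tau > delta + 1" and "delta > 0" and "m_max \<ge> 0"
  shows "(m_max \<le> m_crit tau delta \<longrightarrow>
            invariant_cone (A_L tau delta) (Psi {- lambda_s tau delta .. m_max}) \<and>
            expanding_cone (A_L tau delta) (Psi {- lambda_s tau delta .. m_max}) (lambda_u tau delta))
       \<and> (m_max \<le> 1 \<longrightarrow>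
            invariant_cone (A_L tau delta) (Psi {- lambda_s tau delta .. m_max}) \<and>
            expanding_cone (A_L tau delta) (Psi {- lambda_s tau delta .. m_max})
              (min (lambda_u tau delta) ((lambda_u tau delta + 1) / sqrt 2)))"
proof -
  define ls lu where "ls = lambda_s tau delta" and "lu = lambda_u tau delta"
  have ls: "0 < ls" and lu: "1 < lu"
    using assms lambda_s_pos one_less_lambda_u unfolding ls_def lu_def by auto
  have A: "A_L tau delta = A_L (ls + lu) (ls * lu)"
    using assms discriminant_nonneg lambda_s_plus_lambda_u lambda_s_times_lambda_u
    unfolding ls_def lu_def by simp
  have "m_crit tau delta = ls + 2 * (ls + lu) / (lu\<^sup>2 - 1)"
    unfolding m_crit_def ls_def lu_def lambda_s_plus_lambda_u ..
  moreover have "invariant_cone (A_L tau delta) (Psi {-ls..m_max})"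
    unfolding A using ls lu assms by (intro invariant_cone_A_L) auto
  ultimately show ?thesis
    using ls lu expanding_cone_A_L_lambda_u expanding_cone_A_L_slopes_le_one
    unfolding A ls_def lu_def by auto
qed

end
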